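(* Let $n\ge 2$ and sample $\mathbf C$ from the ensemble $\mathcal{R}_n$ described in the context. Then: (1) $\mathbf C$ is a symplectic matrix, i.e. $(\mathbf C\mathbf v)\odot(\mathbf C\mathbf w)=\mathbf v\odot\mathbf w$ for all $\mathbf v,\mathbf w\in\mathbb{Z}_2^{2n}$. (2) Let $\mathbf v_1,\dots,\mathbf v_{n-1}\in\mathbb{Z}_2^{2n}$ be a uniformly random basis of an $(n-1)$-dimensional isotropic subspace $V$, where $V$ is uniformly random subject to being symplectically orthogonal to $\mathbf f_1$ (sampled independently of $\mathbf C$), and let $\mathbf w_i:=\mathbf C\mathbf v_i$. Then the distribution of $(\mathbf w_1,\dots,\mathbf w_{n-1})$ is within total variation distance $\mathrm{negl}(n)$ of a uniformly random basis of a uniformly random $(n-1)$-dimensional isotropic subspace of $\mathbb{Z}_2^{2n}$.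
   Context: Symplectic inner product on $\mathbb{Z}_2^{2n}$: $(\mathbf a,\mathbf b)\odot(\mathbf a',\mathbf b')=\mathbf a\cdot\mathbf b'+\mathbf a'\cdot\mathbf b \pmod 2$ for $\mathbf a,\mathbf b,\mathbf a',\mathbf b'\in\mathbb{Z}_2^n$. A subspace is isotropic if every two of its vectors are symplectically orthogonal. The standard symplectic basis is $\mathbf e_1,\dots,\mathbf e_n,\mathbf f_1,\dots,\mathbf f_n$, where $\mathbf e_i$ has a single $1$ in position $i$ and $\mathbf f_i$ has a single $1$ in position $n+i$. The ensemble $\mathcal{R}_n$ (random symplectic hyperplane rotation): sample $\mathbf r\sim\mathbb{Z}_2^{2n}$ uniformly. Let $k$ be the smallest index $k\ge1$ with $r_{n+k}=1$; if no such index exists, output $\mathbf C=\mathbf I$. Otherwise let $\mathbf r'$ equal $\mathbf r$ with entries $n+1$ and $n+k$ swapped. Let $\mathbf C_0$ be the linear map with $\mathbf e_1\mapsto\mathbf e_1$, $\mathbf f_1\mapsto\mathbf r'$, $\mathbf e_j\mapsto\mathbf e_j+(\mathbf r'\odot\mathbf e_j)\mathbf e_1$ and $\mathbf f_j\mapsto\mathbf f_j+(\mathbf r'\odot\mathbf f_j)\mathbf e_1$ for $j=2,\dots,n$. Let $\mathbf\Pi$ be the matrix swapping $\mathbf e_1\leftrightarrow\mathbf e_k$ and $\mathbf f_1\leftrightarrow\mathbf f_k$ and fixing all other $\mathbf e_j,\mathbf f_j$. Output $\mathbf C:=\mathbf\Pi\mathbf C_0$ (so $\mathbf C\mathbf f_1=\mathbf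 r$). *)

theory Defs
  imports "HOL-Probability.Probability_Mass_Function" "HOL-Library.Z2"
begin

(* Vectors of Z_2^{2n} are functions nat => bit supported on {0..<2n}.
   0-based indexing: the 1-based position p corresponds to index p-1.
   So e_i (1<=i<=n) is the unit vector at index i-1 and f_i is the unit
   vector at index n+i-1. *)

definition vecs :: "nat \<Rightarrow> (nat \<Rightarrow> bit) set" where
  "vecs n = {v. \<forall>i. 2*n \<le> i \<longrightarrow> v i = 0}"

definition unitv :: "nat \<Rightarrow> nat \<Rightarrow> bit" where
  "unitv j = (\<lambda>i. if i = j then 1 else 0)"

definition evec :: "nat \<Rightarrow> nat \<Rightarrow> bit" where
  "evec i = unitv (i - 1)"

definition fvec :: "nat \<Rightarrow> nat \<Rightarrow> nat \<Rightarrow> bit" where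
  "fvec n i = unitv (n + i - 1)"

definition symp :: "nat \<Rightarrow> (nat \<Rightarrow> bit) \<Rightarrow> (nat \<Rightarrow> bit) \<Rightarrow> bit" where
  "symp n x y = (\<Sum>i<n. x i * y (n + i) + x (n + i) * y i)"

definition vadd :: "(nat \<Rightarrow> bit) \<Rightarrow> (nat \<Rightarrow> bit) \<Rightarrow> nat \<Rightarrow> bit" where
  "vadd x y = (\<lambda>i. x i + y i)"

definition vscale :: "bit \<Rightarrow> (nat \<Rightarrow> bit) \<Rightarrow> nat \<Rightarrow> bit" where
  "vscale c x = (\<lambda>i. c * x i)"

definition has_k :: "nat \<Rightarrow> (nat \<Rightarrow> bit) \<Rightarrow> bool" where
  "has_k n r \<longleftrightarrow> (\<exists>k. 1 \<le> k \<and> k \<le> n \<and> r (n + k - 1) = 1)"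

definition kidx :: "nat \<Rightarrow> (nat \<Rightarrow> bit) \<Rightarrow> nat" where
  "kidx n r = (LEAST k. 1 \<le> k \<and> k \<le> n \<and> r (n + k - 1) = 1)"

definition rprime :: "nat \<Rightarrow> (nat \<Rightarrow> bit) \<Rightarrow> nat \<Rightarrow> bit" where
  "rprime n r = (let k = kidx n r in
     (\<lambda>i. if i = n then r (n + k - 1) else if i = n + k - 1 then r n else r i))"

(* image under C_0 of the basis vector with 0-based index j (j < 2n):
   e_1 |-> e_1, f_1 |-> r', and for the other basis vectors b:
   b |-> b + (r' . b) e_1 *)
definition C0col :: "nat \<Rightarrow> (nat \<Rightarrow> bit) \<Rightarrow> nat \<Rightarrow> nat \<Rightarrow> bit" where
  "C0col n r j =
     (if j = 0 then evec 1
      else if j = n then rprime n r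
      else vadd (unitv j) (vscale (symp n (rprime n r) (unitv j)) (evec 1)))"

definition C0map :: "nat \<Rightarrow> (nat \<Rightarrow> bit) \<Rightarrow> (nat \<Rightarrow> bit) \<Rightarrow> nat \<Rightarrow> bit" where
  "C0map n r x = (\<lambda>i. \<Sum>j<2*n. x j * C0col n r j i)"

(* index permutation swapping (1-based) 1 <-> k and n+1 <-> n+k *)
definition piidx :: "nat \<Rightarrow> nat \<Rightarrow> nat \<Rightarrow> nat" where
  "piidx n k i = (if i = 0 then k - 1 else if i = k - 1 then 0
                  else if i = n then n + k - 1 else if i = n + k - 1 then n else i)"

definition Pimap :: "nat \<Rightarrow> nat \<Rightarrow> (nat \<Rightarrow> bit) \<Rightarrow> nat \<Rightarrow> bit" where
  "Pimap n k x = (\<lambda>i. x (piidx n k i))"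

definition Cmap :: "nat \<Rightarrow> (nat \<Rightarrow> bit) \<Rightarrow> (nat \<Rightarrow> bit) \<Rightarrow> nat \<Rightarrow> bit" where
  "Cmap n r x = (if has_k n r then Pimap n (kidx n r) (C0map n r x) else x)"

definition lincomb :: "(nat \<Rightarrow> bit) \<Rightarrow> (nat \<Rightarrow> bit) list \<Rightarrow> nat \<Rightarrow> bit" where
  "lincomb c vs = (\<lambda>i. \<Sum>j<length vs. c j * (vs ! j) i)"

definition lspan :: "(nat \<Rightarrow> bit) list \<Rightarrow> (nat \<Rightarrow> bit) set" where
  "lspan vs = {lincomb c vs | c. True}"

definition lin_indep :: "(nat \<Rightarrow> bit) list \<Rightarrow> bool" where
  "lin_indep vs \<longleftrightarrow> (\<forall>c. lincomb c vs = (\<lambda>_. 0) \<longrightarrow> (\<forall>j<length vs. c j = 0))"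

definition bases_of :: "(nat \<Rightarrow> bit) set \<Rightarrow> (nat \<Rightarrow> bit) list set" where
  "bases_of V = {vs. lin_indep vs \<and> lspan vs = V}"

definition subspace_dim :: "nat \<Rightarrow> nat \<Rightarrow> (nat \<Rightarrow> bit) set \<Rightarrow> bool" where
  "subspace_dim n d V \<longleftrightarrow> V \<subseteq> vecs n \<and> (\<exists>vs. length vs = d \<and> vs \<in> bases_of V)"

definition isotropic :: "nat \<Rightarrow> (nat \<Rightarrow> bit) set \<Rightarrow> bool" where
  "isotropic n V \<longleftrightarrow> (\<forall>v\<in>V. \<forall>w\<in>V. symp n v w = 0)"

definition iso_subspaces :: "nat \<Rightarrow> nat \<Rightarrow> (nat \<Rightarrow> bit) set set" where
  "iso_subspaces n d = {V. subspace_dim n d V \<and> isotropic n V}"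

definition tvd :: "'a pmf \<Rightarrow> 'a pmf \<Rightarrow> real" where
  "tvd p q = (SUP A. \<bar>measure_pmf.prob p A - measure_pmf.prob q A\<bar>)"

definition negligible :: "(nat \<Rightarrow> real) \<Rightarrow> bool" where
  "negligible \<epsilon> \<longleftrightarrow> (\<forall>c::nat. \<exists>N. \<forall>n\<ge>N. \<bar>\<epsilon> n\<bar> \<le> 1 / real n ^ c)"

definition out_dist :: "nat \<Rightarrow> (nat \<Rightarrow> bit) list pmf" where
  "out_dist n =
     do { r \<leftarrow> pmf_of_set (vecs n);
          V \<leftarrow> pmf_of_set {V \<in> iso_subspaces n (n - 1). \<forall>v\<in>V. symp n v (fvec n 1) = 0};
          vs \<leftarrow> pmf_of_set (bases_of V);
          return_pmf (map (Cmap n r) vs) }"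

definition ideal_dist :: "nat \<Rightarrow> (nat \<Rightarrow> bit) list pmf" where
  "ideal_dist n =
     do { W \<leftarrow> pmf_of_set (iso_subspaces n (n - 1));
          pmf_of_set (bases_of W) }"

end

theory Submission
  imports Defs "HOL-Combinatorics.Transposition" "HOL-Real_Asymp.Real_Asymp"
begin

(* Part (1): C = Pi C0, where Pi permutes symplectic pairs of coordinates and C0 preserves the form
   on the standard basis.

   Part (2): let B(y) be a uniform basis of a uniform (n-1)-dimensional isotropic subspace
   orthogonal to y. A symplectic map g transports B(y) to B(g y), so the output is the mixture of
   B(C f1) over uniform r. The map r |-> C f1 is an involution on the strings r having some
   r_{n+k} = 1 and sends the remaining 2^n strings to f1, so the output is
   (sum of B(y) over y with has_k + 2^n B(f1)) / 2^(2n). On the other side, the symplectic maps act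
   transitively on nonzero vectors and every (n-1)-dimensional isotropic W has |W^perp| = 2^(n+1);
   double counting the pairs (y, W) with 0 <> y in W^perp shows that the ideal distribution is the
   uniform mixture of B(y) over y <> 0. The two mixtures are 2^(-n) apart in total variation. *)

declare add_bit_eq_xor[simp del] mult_bit_eq_and[simp del]

section \<open>Vectors over Z_2 and the symplectic form\<close>

lemma bit_add_self [simp]: "(x::bit) + x = 0"
  by (cases x) simp_all

lemma bit_0_or_1: "(x::bit) = 0 \<or> x = 1"
  by (cases x) simp_all

lemma UNIV_bit: "(UNIV::bit set) = {0, 1}"
  using bit_0_or_1 by auto

lemma card_UNIV_bit: "card (UNIV::bit set) = 2"
  by (simp add: UNIV_bit)

lemma finite_UNIV_bit [simp]: "finite (UNIV::bit set)"
  by (simp add: UNIV_bit)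

definition supported_on :: "nat set \<Rightarrow> (nat \<Rightarrow> bit) set" where
  "supported_on I = {v. \<forall>i. i \<notin> I \<longrightarrow> v i = 0}"

lemma bij_betw_restrict_supported_on:
  "bij_betw (\<lambda>v. restrict v I) (supported_on I) (PiE I (\<lambda>_. UNIV))"
  by (rule bij_betw_byWitness[where f'="\<lambda>f i. if i \<in> I then f i else 0"])
     (auto simp: supported_on_def fun_eq_iff PiE_def extensional_def)

lemma card_supported_on: "finite I \<Longrightarrow> card (supported_on I) = 2 ^ card I"
  using bij_betw_same_card[OF bij_betw_restrict_supported_on[of I]]
  by (simp add: card_PiE card_UNIV_bit)

lemma finite_supported_on: "finite I \<Longrightarrow> finite (supported_on I)"
  using bij_betw_finite[OF bij_betw_restrict_supported_on[of I]] by (simp add: finite_PiE)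

lemma vecs_eq_supported_on: "vecs n = supported_on {..<2*n}"
  by (auto simp: vecs_def supported_on_def)

lemma card_vecs: "card (vecs n) = 2 ^ (2*n)"
  by (simp add: vecs_eq_supported_on card_supported_on)

lemma finite_vecs [simp]: "finite (vecs n)"
  by (simp add: vecs_eq_supported_on finite_supported_on)

lemma zero_in_vecs [simp]: "(\<lambda>_. 0) \<in> vecs n"
  by (simp add: vecs_def)

lemma vadd_in_vecs: "x \<in> vecs n \<Longrightarrow> y \<in> vecs n \<Longrightarrow> vadd x y \<in> vecs n"
  by (simp add: vecs_def vadd_def)

lemma vscale_in_vecs: "x \<in> vecs n \<Longrightarrow> vscale c x \<in> vecs n"
  by (simp add: vecs_def vscale_def)

lemma unitv_in_vecs: "j < 2*n \<Longrightarrow> unitv j \<in> vecs n"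
  by (simp add: unitv_def vecs_def)

lemma unitv_apply: "unitv j i = (if i = j then 1 else 0)"
  by (simp add: unitv_def)

lemma fvec_1_in_vecs: "n \<ge> 1 \<Longrightarrow> fvec n 1 \<in> vecs n"
  by (simp add: fvec_def unitv_in_vecs)

lemma vadd_self [simp]: "vadd x x = (\<lambda>_. 0)"
  by (simp add: vadd_def)

lemma vadd_cancel_right [simp]: "vadd (vadd x y) y = x"
  by (simp add: vadd_def add.assoc)

lemma vecs_nonzero_index:
  assumes "x \<in> vecs n" "x \<noteq> (\<lambda>_. 0)"
  obtains i where "i < 2*n" "x i = 1"
proof -
  obtain i where "x i \<noteq> 0" using assms(2) by (auto simp: fun_eq_iff)
  moreover have "i < 2*n" using assms(1) calculation by (auto simp: vecs_def not_le[symmetric])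
  ultimately show ?thesis using that bit_0_or_1 by blast
qed

lemma lincomb_Nil [simp]: "lincomb c [] = (\<lambda>_. 0)"
  by (simp add: lincomb_def)

lemma lincomb_Cons: "lincomb c (w # ws) = vadd (vscale (c 0) w) (lincomb (\<lambda>l. c (Suc l)) ws)"
  unfolding lincomb_def vadd_def vscale_def length_Cons sum.lessThan_Suc_shift by simp

lemma lincomb_in_vecs: "set vs \<subseteq> vecs n \<Longrightarrow> lincomb c vs \<in> vecs n"
  by (induction vs arbitrary: c) (simp_all add: lincomb_Cons vadd_in_vecs vscale_in_vecs)

lemma lincomb_in_lspan: "lincomb c vs \<in> lspan vs"
  by (auto simp: lspan_def)

lemma vecs_eq_lincomb_unitv:
  assumes "x \<in> vecs n"
  shows "x = lincomb x (map unitv [0..<2*n])"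
proof
  fix i
  have "lincomb x (map unitv [0..<2*n]) i = (\<Sum>j<2*n. if j = i then x j else 0)"
    unfolding lincomb_def by (rule sum.cong) (auto simp: unitv_def)
  then show "x i = lincomb x (map unitv [0..<2*n]) i"
    using assms by (auto simp: vecs_def)
qed

lemma symp_commute: "symp n x y = symp n y x"
  unfolding symp_def by (rule sum.cong) (auto simp: algebra_simps)

lemma symp_self [simp]: "symp n x x = 0"
  unfolding symp_def by (simp add: mult.commute)

lemma symp_vadd_left: "symp n (vadd x y) z = symp n x z + symp n y z"
  unfolding symp_def vadd_def by (simp add: sum.distrib[symmetric] algebra_simps)

lemma symp_vadd_right: "symp n z (vadd x y) = symp n z x + symp n z y"
  using symp_vadd_left by (simp add: symp_commute)

lemma symp_vscale_left: "symp n (vscale c x) z = c * symp n x z"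
  unfolding symp_def vscale_def by (simp add: sum_distrib_left algebra_simps)

lemma symp_vscale_right: "symp n z (vscale c x) = c * symp n z x"
  using symp_vscale_left by (simp add: symp_commute)

lemma symp_zero_left [simp]: "symp n (\<lambda>_. 0) z = 0"
  by (simp add: symp_def)

lemma symp_zero_right [simp]: "symp n z (\<lambda>_. 0) = 0"
  by (simp add: symp_def)

lemma symp_lincomb_left: "symp n (lincomb c vs) z = (\<Sum>j<length vs. c j * symp n (vs ! j) z)"
  by (induction vs arbitrary: c)
     (simp_all add: lincomb_Cons symp_vadd_left symp_vscale_left sum.lessThan_Suc_shift
        del: sum.lessThan_Suc)

lemma symp_lincomb_right: "symp n z (lincomb c vs) = (\<Sum>j<length vs. c j * symp n z (vs ! j))"
  using symp_lincomb_left by (simp add: symp_commute)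

lemma symp_unitv_right:
  "symp n x (unitv j) = (if j < n then x (n + j) else if j < 2*n then x (j - n) else 0)"
proof -
  have "symp n x (unitv j) = (\<Sum>i<n. if i = j - n \<and> n \<le> j then x i else 0)
                            + (\<Sum>i<n. if i = j then x (n + i) else 0)"
    unfolding symp_def unitv_def sum.distrib[symmetric] by (rule sum.cong) auto
  also have "\<dots> = (if j < n then x (n + j) else if j < 2*n then x (j - n) else 0)"
    by (cases "j < n"; cases "j < 2*n") (simp_all add: sum.delta')
  finally show ?thesis .
qed

lemma symp_unitv_left:
  "symp n (unitv j) x = (if j < n then x (n + j) else if j < 2*n then x (j - n) else 0)"
  by (simp add: symp_commute symp_unitv_right)

lemma symp_nondegenerate:
  assumes "x \<in> vecs n" "x \<noteq> (\<lambda>_. 0)"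
  obtains j where "j < 2*n" "symp n (unitv j) x = 1"
proof -
  obtain i where i: "i < 2*n" "x i = 1" using vecs_nonzero_index[OF assms] .
  show ?thesis
  proof (cases "i < n")
    case True
    with i that[of "n + i"] show ?thesis by (simp add: symp_unitv_left)
  next
    case False
    with i that[of "i - n"] show ?thesis by (simp add: symp_unitv_left)
  qed
qed

section \<open>Symplectic maps\<close>

text \<open>Over Z_2 additivity is linearity. Maps are only constrained on \<^term>\<open>vecs n\<close>, so that the
  inverse of a bijection of \<^term>\<open>vecs n\<close> is again such a map.\<close>

definition linear_endo :: "nat \<Rightarrow> ((nat \<Rightarrow> bit) \<Rightarrow> nat \<Rightarrow> bit) \<Rightarrow> bool" where
  "linear_endo n g \<longleftrightarrow> (\<forall>x\<in>vecs n. g x \<in> vecs n)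
     \<and> (\<forall>x\<in>vecs n. \<forall>y\<in>vecs n. g (vadd x y) = vadd (g x) (g y))"

definition symplectic_map :: "nat \<Rightarrow> ((nat \<Rightarrow> bit) \<Rightarrow> nat \<Rightarrow> bit) \<Rightarrow> bool" where
  "symplectic_map n g \<longleftrightarrow> linear_endo n g
     \<and> (\<forall>x\<in>vecs n. \<forall>y\<in>vecs n. symp n (g x) (g y) = symp n x y)"

lemma linear_endo_in_vecs: "linear_endo n g \<Longrightarrow> x \<in> vecs n \<Longrightarrow> g x \<in> vecs n"
  by (simp add: linear_endo_def)

lemma linear_endo_vadd:
  "linear_endo n g \<Longrightarrow> x \<in> vecs n \<Longrightarrow> y \<in> vecs n \<Longrightarrow> g (vadd x y) = vadd (g x) (g y)"
  by (simp add: linear_endo_def)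

lemma linear_endo_zero:
  assumes "linear_endo n g"
  shows "g (\<lambda>_. 0) = (\<lambda>_. 0)"
  using linear_endo_vadd[OF assms zero_in_vecs zero_in_vecs] by (simp add: vadd_def)

lemma linear_endo_vscale:
  assumes "linear_endo n g" "x \<in> vecs n"
  shows "g (vscale c x) = vscale c (g x)"
  using bit_0_or_1[of c] linear_endo_zero[OF assms(1)] by (auto simp: vscale_def)

lemma linear_endo_lincomb:
  assumes "linear_endo n g" "set vs \<subseteq> vecs n"
  shows "g (lincomb c vs) = lincomb c (map g vs)"
  using assms(2)
  by (induction vs arbitrary: c)
     (simp_all add: linear_endo_zero[OF assms(1)] lincomb_Cons linear_endo_vadd[OF assms(1)]
       linear_endo_vscale[OF assms(1)] vscale_in_vecs lincomb_in_vecs)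

lemma symplectic_map_linear_endo: "symplectic_map n g \<Longrightarrow> linear_endo n g"
  by (simp add: symplectic_map_def)

lemma symplectic_map_symp:
  "symplectic_map n g \<Longrightarrow> x \<in> vecs n \<Longrightarrow> y \<in> vecs n \<Longrightarrow> symp n (g x) (g y) = symp n x y"
  by (simp add: symplectic_map_def)

lemma symplectic_mapI_unitv:
  assumes g: "linear_endo n g"
    and units: "\<And>j l. j < 2*n \<Longrightarrow> l < 2*n \<Longrightarrow>
                  symp n (g (unitv j)) (g (unitv l)) = symp n (unitv j) (unitv l)"
  shows "symplectic_map n g"
  unfolding symplectic_map_def
proof (intro conjI g ballI)
  fix x y assume x: "x \<in> vecs n" and y: "y \<in> vecs n"
  define U where "U = map unitv [0..<2*n]"
  have U: "set U \<subseteq> vecs n" by (auto simp: U_def unitv_in_vecs)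
  have gx: "g x = lincomb x (map g U)" and gy: "g y = lincomb y (map g U)"
    using vecs_eq_lincomb_unitv[OF x] vecs_eq_lincomb_unitv[OF y] linear_endo_lincomb[OF g U]
    by (metis U_def)+
  have "symp n (g x) (g y) = (\<Sum>l<2*n. y l * (\<Sum>j<2*n. x j * symp n (g (U!j)) (g (U!l))))"
    unfolding gx gy symp_lincomb_left symp_lincomb_right by (simp add: U_def)
  also have "\<dots> = (\<Sum>l<2*n. y l * (\<Sum>j<2*n. x j * symp n (U!j) (U!l)))"
    using units by (simp add: U_def)
  also have "\<dots> = symp n (lincomb x U) (lincomb y U)"
    unfolding symp_lincomb_left symp_lincomb_right by (simp add: U_def)
  finally show "symp n (g x) (g y) = symp n x y"
    using vecs_eq_lincomb_unitv[OF x] vecs_eq_lincomb_unitv[OF y] by (simp add: U_def)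
qed

lemma symplectic_map_id: "symplectic_map n id"
  by (simp add: symplectic_map_def linear_endo_def)

lemma symplectic_map_comp:
  "symplectic_map n g \<Longrightarrow> symplectic_map n h \<Longrightarrow> symplectic_map n (g \<circ> h)"
  by (simp add: symplectic_map_def linear_endo_def)

lemma symplectic_map_inj_on:
  assumes g: "symplectic_map n g"
  shows "inj_on g (vecs n)"
proof
  fix x y assume x: "x \<in> vecs n" and y: "y \<in> vecs n" and "g x = g y"
  then have g0: "g (vadd x y) = (\<lambda>_. 0)"
    by (simp add: linear_endo_vadd[OF symplectic_map_linear_endo[OF g]])
  have "vadd x y = (\<lambda>_. 0)"
  proof (rule ccontr)
    assume "vadd x y \<noteq> (\<lambda>_. 0)"
    then obtain j where "j < 2*n" "symp n (unitv j) (vadd x y) = 1"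
      using symp_nondegenerate vadd_in_vecs[OF x y] by blast
    then show False
      using symplectic_map_symp[OF g unitv_in_vecs vadd_in_vecs[OF x y]] g0 by simp
  qed
  then show "x = y" using vadd_cancel_right[of x y] by (simp add: vadd_def)
qed

lemma symplectic_map_image_vecs: "symplectic_map n g \<Longrightarrow> g ` vecs n = vecs n"
  by (rule endo_inj_surj[OF finite_vecs])
     (use linear_endo_in_vecs[OF symplectic_map_linear_endo] symplectic_map_inj_on in blast)+

lemma symplectic_map_inv:
  assumes g: "symplectic_map n g"
  shows "symplectic_map n (inv_into (vecs n) g)"
proof -
  let ?h = "inv_into (vecs n) g"
  have onto: "g ` vecs n = vecs n" by (rule symplectic_map_image_vecs[OF g])
  have h_in: "?h x \<in> vecs n" if "x \<in> vecs n" for x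
    using that onto by (metis inv_into_into)
  have g_h: "g (?h x) = x" if "x \<in> vecs n" for x
    using that onto by (metis f_inv_into_f)
  have h_g: "?h (g x) = x" if "x \<in> vecs n" for x
    by (rule inv_into_f_f[OF symplectic_map_inj_on[OF g] that])
  have "?h (vadd x y) = vadd (?h x) (?h y)" if "x \<in> vecs n" "y \<in> vecs n" for x y
    using h_g[OF vadd_in_vecs[OF h_in h_in]] that g_h
      linear_endo_vadd[OF symplectic_map_linear_endo[OF g] h_in h_in] by metis
  moreover have "symp n (?h x) (?h y) = symp n x y" if "x \<in> vecs n" "y \<in> vecs n" for x y
    using symplectic_map_symp[OF g h_in h_in] that g_h by metis
  ultimately show ?thesis using h_in by (simp add: symplectic_map_def linear_endo_def)
qed

lemma symplectic_map_inv_image: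
  assumes "symplectic_map n g" "V \<subseteq> vecs n"
  shows "inv_into (vecs n) g ` g ` V = V"
  using inv_into_image_cancel[OF symplectic_map_inj_on[OF assms(1)] assms(2)] .

lemma symplectic_map_image_inv:
  assumes "symplectic_map n g" "V \<subseteq> vecs n"
  shows "g ` inv_into (vecs n) g ` V = V"
  using assms symplectic_map_image_vecs[OF assms(1)] by (simp add: image_inv_into_cancel)

lemma lincomb_indicator:
  assumes "j < length vs"
  shows "lincomb (\<lambda>l. if l = j then 1 else 0) vs = vs ! j"
proof
  fix i
  have "lincomb (\<lambda>l. if l = j then 1 else 0) vs i = (\<Sum>l<length vs. if l = j then (vs ! l) i else 0)"
    unfolding lincomb_def by (rule sum.cong) auto
  then show "lincomb (\<lambda>l. if l = j then 1 else 0) vs i = (vs ! j) i"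
    using assms by simp
qed

lemma set_in_lspan: "set vs \<subseteq> lspan vs"
proof
  fix x assume "x \<in> set vs"
  then obtain j where "j < length vs" "x = vs ! j" by (auto simp: in_set_conv_nth)
  then show "x \<in> lspan vs" using lincomb_in_lspan lincomb_indicator by metis
qed

lemma bases_of_set_subset: "vs \<in> bases_of V \<Longrightarrow> set vs \<subseteq> V"
  unfolding bases_of_def using set_in_lspan by blast

lemma lin_indep_distinct:
  assumes "lin_indep vs"
  shows "distinct vs"
  unfolding distinct_conv_nth
proof (intro allI impI notI)
  fix i j assume i: "i < length vs" and j: "j < length vs" and "i \<noteq> j" and "vs ! i = vs ! j"
  define c where "c l = (if l = i then 1 else 0) + (if l = j then 1 else (0::bit))" for l
  have "lincomb c vs = vadd (vs ! i) (vs ! j)"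
    using lincomb_indicator[OF i] lincomb_indicator[OF j]
    by (simp add: c_def lincomb_def vadd_def fun_eq_iff distrib_right sum.distrib)
  then have "lincomb c vs = (\<lambda>_. 0)" using \<open>vs ! i = vs ! j\<close> by simp
  then have "c i = 0" using assms i unfolding lin_indep_def by blast
  then show False using \<open>i \<noteq> j\<close> by (simp add: c_def)
qed

lemma finite_bases_of: "finite V \<Longrightarrow> finite (bases_of V)"
  by (rule finite_subset[OF _ finite_subset_distinct[of V]])
     (auto dest: bases_of_set_subset, simp add: bases_of_def lin_indep_distinct)

lemma lspan_map:
  assumes "linear_endo n g" "set vs \<subseteq> vecs n"
  shows "lspan (map g vs) = g ` lspan vs"
proof -
  have "lspan (map g vs) = range (\<lambda>c. g (lincomb c vs))"
    by (simp add: lspan_def linear_endo_lincomb[OF assms] full_SetCompr_eq)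
  also have "\<dots> = g ` lspan vs"
    by (simp add: lspan_def full_SetCompr_eq image_image)
  finally show ?thesis .
qed

lemma lin_indep_map:
  assumes g: "symplectic_map n g" and vs: "set vs \<subseteq> vecs n" "lin_indep vs"
  shows "lin_indep (map g vs)"
  unfolding lin_indep_def
proof (intro allI impI)
  fix c j assume "lincomb c (map g vs) = (\<lambda>_. 0)" "j < length (map g vs)"
  then have "g (lincomb c vs) = g (\<lambda>_. 0)"
    using linear_endo_lincomb[OF symplectic_map_linear_endo[OF g] vs(1)]
      linear_endo_zero[OF symplectic_map_linear_endo[OF g]] by simp
  then have "lincomb c vs = (\<lambda>_. 0)"
    by (rule inj_onD[OF symplectic_map_inj_on[OF g] _ lincomb_in_vecs[OF vs(1)] zero_in_vecs])
  then show "c j = 0" using vs(2) \<open>j < length (map g vs)\<close> by (simp add: lin_indep_def)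
qed

lemma map_in_bases_of_image:
  assumes g: "symplectic_map n g" and V: "V \<subseteq> vecs n" and vs: "vs \<in> bases_of V"
  shows "map g vs \<in> bases_of (g ` V)"
proof -
  have vs_vecs: "set vs \<subseteq> vecs n" using bases_of_set_subset[OF vs] V by blast
  have "lin_indep (map g vs)"
    using vs lin_indep_map[OF g vs_vecs] by (simp add: bases_of_def)
  moreover have "lspan (map g vs) = g ` V"
    using vs lspan_map[OF symplectic_map_linear_endo[OF g] vs_vecs] by (simp add: bases_of_def)
  ultimately show ?thesis by (simp add: bases_of_def)
qed

lemma bases_of_image:
  assumes g: "symplectic_map n g" and V: "V \<subseteq> vecs n"
  shows "bases_of (g ` V) = map g ` bases_of V"
proof
  show "map g ` bases_of V \<subseteq> bases_of (g ` V)"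
    using map_in_bases_of_image[OF g V] by blast
next
  let ?h = "inv_into (vecs n) g"
  show "bases_of (g ` V) \<subseteq> map g ` bases_of V"
  proof
    fix ws assume ws: "ws \<in> bases_of (g ` V)"
    have gV: "g ` V \<subseteq> vecs n"
      using V linear_endo_in_vecs[OF symplectic_map_linear_endo[OF g]] by blast
    have hws: "map ?h ws \<in> bases_of V"
      using map_in_bases_of_image[OF symplectic_map_inv[OF g] gV ws]
      unfolding symplectic_map_inv_image[OF g V] .
    have "map (g \<circ> ?h) ws = ws"
    proof (rule map_idI)
      fix w assume "w \<in> set ws"
      then have "w \<in> g ` vecs n" using bases_of_set_subset[OF ws] V by blast
      then show "(g \<circ> ?h) w = w" by (simp add: f_inv_into_f)
    qed
    then have "ws = map g (map ?h ws)" by simp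
    then show "ws \<in> map g ` bases_of V" using hws by (rule image_eqI)
  qed
qed

lemma iso_subspaces_subset_vecs: "V \<in> iso_subspaces n d \<Longrightarrow> V \<subseteq> vecs n"
  by (simp add: iso_subspaces_def subspace_dim_def)

lemma finite_iso_subspaces: "finite (iso_subspaces n d)"
  by (rule finite_subset[of _ "Pow (vecs n)"]) (auto dest: iso_subspaces_subset_vecs)

lemma finite_bases_of_iso_subspace: "V \<in> iso_subspaces n d \<Longrightarrow> finite (bases_of V)"
  by (meson finite_bases_of finite_subset finite_vecs iso_subspaces_subset_vecs)

lemma bases_of_iso_subspace_nonempty: "V \<in> iso_subspaces n d \<Longrightarrow> bases_of V \<noteq> {}"
  by (auto simp: iso_subspaces_def subspace_dim_def)

lemma image_in_iso_subspaces:
  assumes g: "symplectic_map n g" and V: "V \<in> iso_subspaces n d"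
  shows "g ` V \<in> iso_subspaces n d"
proof -
  have Vv: "V \<subseteq> vecs n" by (rule iso_subspaces_subset_vecs[OF V])
  obtain vs where vs: "length vs = d" "vs \<in> bases_of V"
    using V by (auto simp: iso_subspaces_def subspace_dim_def)
  have "map g vs \<in> bases_of (g ` V)" by (rule map_in_bases_of_image[OF g Vv vs(2)])
  moreover have "g ` V \<subseteq> vecs n"
    using Vv linear_endo_in_vecs[OF symplectic_map_linear_endo[OF g]] by blast
  moreover have "isotropic n (g ` V)"
    unfolding isotropic_def
  proof (intro ballI)
    fix v w assume "v \<in> g ` V" "w \<in> g ` V"
    then obtain v' w' where "v' \<in> V" "w' \<in> V" "v = g v'" "w = g w'" by blast
    moreover from this have "v' \<in> vecs n" "w' \<in> vecs n" using Vv by auto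
    ultimately show "symp n v w = 0"
      using V symplectic_map_symp[OF g] by (simp add: iso_subspaces_def isotropic_def)
  qed
  ultimately show ?thesis
    using vs(1) unfolding iso_subspaces_def subspace_dim_def by (intro CollectI conjI exI) auto
qed

definition perp_iso_subspaces :: "nat \<Rightarrow> nat \<Rightarrow> (nat \<Rightarrow> bit) \<Rightarrow> (nat \<Rightarrow> bit) set set" where
  "perp_iso_subspaces n d y = {V \<in> iso_subspaces n d. \<forall>v\<in>V. symp n v y = 0}"

lemma finite_perp_iso_subspaces: "finite (perp_iso_subspaces n d y)"
  by (rule finite_subset[OF _ finite_iso_subspaces]) (auto simp: perp_iso_subspaces_def)

lemma image_in_perp_iso_subspaces:
  assumes g: "symplectic_map n g" and y: "y \<in> vecs n" and V: "V \<in> perp_iso_subspaces n d y"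
  shows "g ` V \<in> perp_iso_subspaces n d (g y)"
proof -
  have V': "V \<in> iso_subspaces n d" "\<forall>v\<in>V. symp n v y = 0"
    using V by (simp_all add: perp_iso_subspaces_def)
  have "symp n (g v) (g y) = 0" if "v \<in> V" for v
    using that V' iso_subspaces_subset_vecs[OF V'(1)] symplectic_map_symp[OF g _ y] by auto
  then show ?thesis
    using image_in_iso_subspaces[OF g V'(1)] by (simp add: perp_iso_subspaces_def)
qed

lemma image_perp_iso_subspaces:
  assumes g: "symplectic_map n g" and y: "y \<in> vecs n"
  shows "(`) g ` perp_iso_subspaces n d y = perp_iso_subspaces n d (g y)"
proof
  show "(`) g ` perp_iso_subspaces n d y \<subseteq> perp_iso_subspaces n d (g y)"
    using image_in_perp_iso_subspaces[OF g y] by blast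
next
  let ?h = "inv_into (vecs n) g"
  show "perp_iso_subspaces n d (g y) \<subseteq> (`) g ` perp_iso_subspaces n d y"
  proof
    fix W assume W: "W \<in> perp_iso_subspaces n d (g y)"
    have Wv: "W \<subseteq> vecs n" using W by (auto simp: perp_iso_subspaces_def dest: iso_subspaces_subset_vecs)
    have gy: "g y \<in> vecs n" using y linear_endo_in_vecs[OF symplectic_map_linear_endo[OF g]] by blast
    have "?h ` W \<in> perp_iso_subspaces n d y"
      using image_in_perp_iso_subspaces[OF symplectic_map_inv[OF g] gy W]
        inv_into_f_f[OF symplectic_map_inj_on[OF g] y] by simp
    moreover have "W = g ` ?h ` W" using symplectic_map_image_inv[OF g Wv] by simp
    ultimately show "W \<in> (`) g ` perp_iso_subspaces n d y" by blast
  qed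
qed

lemma inj_on_image_perp_iso_subspaces:
  assumes g: "symplectic_map n g"
  shows "inj_on ((`) g) (perp_iso_subspaces n d y)"
proof (rule inj_onI)
  fix V V' assume "V \<in> perp_iso_subspaces n d y" "V' \<in> perp_iso_subspaces n d y" "g ` V = g ` V'"
  then show "V = V'"
    using inj_on_image_eq_iff[OF symplectic_map_inj_on[OF g]]
    by (auto simp: perp_iso_subspaces_def dest!: iso_subspaces_subset_vecs)
qed

lemma card_perp_iso_subspaces_image:
  assumes g: "symplectic_map n g" and y: "y \<in> vecs n"
  shows "card (perp_iso_subspaces n d (g y)) = card (perp_iso_subspaces n d y)"
  using inj_on_image_perp_iso_subspaces[OF g]
  by (simp add: card_image flip: image_perp_iso_subspaces[OF g y])

section \<open>The ensemble\<close>

lemma has_k_iff: "has_k n r \<longleftrightarrow> (\<exists>i. n \<le> i \<and> i < 2*n \<and> r i = 1)"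
  unfolding has_k_def
proof
  assume "\<exists>k\<ge>1. k \<le> n \<and> r (n + k - 1) = 1"
  then obtain k where "1 \<le> k" "k \<le> n" "r (n + k - 1) = 1" by blast
  then show "\<exists>i. n \<le> i \<and> i < 2*n \<and> r i = 1" by (intro exI[of _ "n + k - 1"]) auto
next
  assume "\<exists>i. n \<le> i \<and> i < 2*n \<and> r i = 1"
  then obtain i where "n \<le> i" "i < 2*n" "r i = 1" by blast
  then show "\<exists>k\<ge>1. k \<le> n \<and> r (n + k - 1) = 1" by (intro exI[of _ "i - n + 1"]) auto
qed

lemma not_has_k_eq_supported_on: "{r \<in> vecs n. \<not> has_k n r} = supported_on {..<n}"
proof -
  have "\<not> has_k n r \<longleftrightarrow> (\<forall>i. n \<le> i \<and> i < 2*n \<longrightarrow> r i = 0)" for r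
    using bit_0_or_1 by (auto simp: has_k_iff)
  then show ?thesis by (auto simp: vecs_def supported_on_def) (meson not_le)
qed

lemma card_not_has_k: "card {r \<in> vecs n. \<not> has_k n r} = 2 ^ n"
  by (simp add: not_has_k_eq_supported_on card_supported_on)

lemma card_has_k: "card {r \<in> vecs n. has_k n r} + 2 ^ n = 2 ^ (2*n)"
proof -
  have "card (vecs n) = card ({r \<in> vecs n. has_k n r} \<union> {r \<in> vecs n. \<not> has_k n r})"
    by (rule arg_cong[where f=card]) blast
  also have "\<dots> = card {r \<in> vecs n. has_k n r} + card {r \<in> vecs n. \<not> has_k n r}"
    by (rule card_Un_disjoint) auto
  finally show ?thesis by (simp add: card_vecs card_not_has_k)
qed

lemma kidx_spec:
  assumes "has_k n r"
  shows "1 \<le> kidx n r" "kidx n r \<le> n" "r (n + kidx n r - 1) = 1"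
proof -
  have "1 \<le> kidx n r \<and> kidx n r \<le> n \<and> r (n + kidx n r - 1) = 1"
    unfolding kidx_def using assms[unfolded has_k_def] by (rule LeastI_ex)
  then show "1 \<le> kidx n r" "kidx n r \<le> n" "r (n + kidx n r - 1) = 1" by auto
qed

lemma has_k_cong: "(\<And>i. n \<le> i \<Longrightarrow> r' i = r i) \<Longrightarrow> has_k n r' = has_k n r"
  unfolding has_k_def by (metis le_add1 add_diff_assoc le_add_diff_inverse)

lemma kidx_cong: "(\<And>i. n \<le> i \<Longrightarrow> r' i = r i) \<Longrightarrow> kidx n r' = kidx n r"
  unfolding kidx_def by (metis le_add1 add_diff_assoc le_add_diff_inverse)

lemma piidx_eq:
  assumes "1 \<le> k" "k \<le> n"
  shows "i < n \<Longrightarrow> piidx n k i = Transposition.transpose 0 (k - 1) i"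
    and "i < n \<Longrightarrow> piidx n k (n + i) = n + Transposition.transpose 0 (k - 1) i"
    and "2*n \<le> i \<Longrightarrow> piidx n k i = i"
  using assms by (auto simp: piidx_def Transposition.transpose_def)

lemma symplectic_Pimap:
  assumes k: "1 \<le> k" "k \<le> n"
  shows "symplectic_map n (Pimap n k)"
  unfolding symplectic_map_def linear_endo_def
proof (intro conjI ballI)
  fix x y :: "nat \<Rightarrow> bit"
  assume "x \<in> vecs n"
  then show "Pimap n k x \<in> vecs n" by (simp add: vecs_def Pimap_def piidx_eq(3)[OF k])
  show "Pimap n k (vadd x y) = vadd (Pimap n k x) (Pimap n k y)"
    by (simp add: Pimap_def vadd_def)
  define h where "h i = x i * y (n + i) + x (n + i) * y i" for i
  have "symp n (Pimap n k x) (Pimap n k y) = (\<Sum>i<n. h (Transposition.transpose 0 (k - 1) i))"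
    unfolding symp_def Pimap_def h_def by (rule sum.cong) (simp_all add: piidx_eq[OF k])
  also have "\<dots> = (\<Sum>i<n. h i)"
    by (rule sum.reindex_bij_betw) (use k in simp)
  finally show "symp n (Pimap n k x) (Pimap n k y) = symp n x y" by (simp add: symp_def h_def)
qed

lemma rprime_in_vecs:
  assumes "has_k n r" "r \<in> vecs n"
  shows "rprime n r \<in> vecs n"
  using assms kidx_spec[OF assms(1)] by (auto simp: vecs_def rprime_def Let_def)

lemma rprime_at_n: "has_k n r \<Longrightarrow> rprime n r n = 1"
  using kidx_spec by (simp add: rprime_def Let_def)

lemma C0col_in_vecs:
  assumes "has_k n r" "r \<in> vecs n" "j < 2*n"
  shows "C0col n r j \<in> vecs n"
  using assms rprime_in_vecs[OF assms(1,2)] unitv_in_vecs[of 0 n] unitv_in_vecs[of j n]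
  by (simp add: C0col_def evec_def vadd_in_vecs vscale_in_vecs)

lemma C0map_unitv:
  assumes "j < 2*n"
  shows "C0map n r (unitv j) = C0col n r j"
proof
  fix i
  have "C0map n r (unitv j) i = (\<Sum>l<2*n. if l = j then C0col n r l i else 0)"
    unfolding C0map_def by (rule sum.cong) (simp_all add: unitv_def)
  then show "C0map n r (unitv j) i = C0col n r j i" using assms by simp
qed

lemma linear_endo_C0map:
  assumes "has_k n r" "r \<in> vecs n"
  shows "linear_endo n (C0map n r)"
  unfolding linear_endo_def
proof (intro conjI ballI)
  fix x y :: "nat \<Rightarrow> bit"
  have "C0col n r j i = 0" if "j < 2*n" "2*n \<le> i" for j i
    using C0col_in_vecs[OF assms that(1)] that(2) by (simp add: vecs_def)
  then show "C0map n r x \<in> vecs n" by (simp add: vecs_def C0map_def)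
  show "C0map n r (vadd x y) = vadd (C0map n r x) (C0map n r y)"
    by (simp add: C0map_def vadd_def distrib_right sum.distrib)
qed

lemma symp_C0col:
  assumes r: "has_k n r" and j: "j < 2*n" and l: "l < 2*n"
  shows "symp n (C0col n r j) (C0col n r l) = symp n (unitv j) (unitv l)"
proof -
  define r' where "r' = rprime n r"
  have "0 < n" using kidx_spec[OF r] by simp
  have col: "C0col n r i = (if i = 0 then unitv 0 else if i = n then r'
               else vadd (unitv i) (vscale (symp n r' (unitv i)) (unitv 0)))" for i
    by (simp add: C0col_def evec_def r'_def)
  have e1: "symp n (unitv 0) x = x n" "symp n x (unitv 0) = x n" for x
    using \<open>0 < n\<close> by (simp_all add: symp_unitv_left symp_unitv_right)
  have f1: "symp n (unitv n) x = x 0" "symp n x (unitv n) = x 0" for x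
    using \<open>0 < n\<close> by (simp_all add: symp_unitv_left symp_unitv_right)
  have "r' n = 1" using rprime_at_n[OF r] by (simp add: r'_def)
  with \<open>0 < n\<close> show ?thesis
    by (cases "j = 0"; cases "j = n"; cases "l = 0"; cases "l = n")
       (simp_all add: col e1 f1 symp_vadd_left symp_vadd_right symp_vscale_left symp_vscale_right
          symp_commute[of n r'] unitv_apply)
qed

lemma symplectic_Cmap:
  assumes "r \<in> vecs n"
  shows "symplectic_map n (Cmap n r)"
proof (cases "has_k n r")
  case True
  have "symplectic_map n (C0map n r)"
    by (rule symplectic_mapI_unitv[OF linear_endo_C0map[OF True assms]])
       (simp add: C0map_unitv symp_C0col[OF True])
  then have "symplectic_map n (Pimap n (kidx n r) \<circ> C0map n r)"
    by (rule symplectic_map_comp[OF symplectic_Pimap[OF kidx_spec(1,2)[OF True]]])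
  moreover have "Cmap n r = Pimap n (kidx n r) \<circ> C0map n r"
    using True by (simp add: Cmap_def fun_eq_iff)
  ultimately show ?thesis by simp
next
  case False
  then have "Cmap n r = id" by (simp add: Cmap_def fun_eq_iff)
  then show ?thesis by (simp add: symplectic_map_id)
qed

text \<open>Contrary to the informal description, C f1 is not r but r with the entries 1 and k swapped;
  r \<mapsto> C f1 is nevertheless an involution on the strings with \<^const>\<open>has_k\<close>.\<close>

lemma Cmap_fvec_1:
  assumes r: "has_k n r"
  shows "Cmap n r (fvec n 1) = r \<circ> Transposition.transpose 0 (kidx n r - 1)"
proof -
  have "0 < n" using kidx_spec[OF r] by simp
  then have "C0map n r (fvec n 1) = rprime n r"
    by (simp add: fvec_def C0map_unitv C0col_def)
  then show ?thesis
    using r kidx_spec[OF r]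
    by (auto simp: Cmap_def Pimap_def rprime_def piidx_def Transposition.transpose_def Let_def
        fun_eq_iff One_nat_def)
qed

lemma Cmap_fvec_1_upper_half:
  assumes "has_k n r" "n \<le> i"
  shows "Cmap n r (fvec n 1) i = r i"
  unfolding Cmap_fvec_1[OF assms(1)] using assms kidx_spec[OF assms(1)]
  by (simp add: Transposition.transpose_def)

lemma has_k_Cmap_fvec_1: "has_k n r \<Longrightarrow> has_k n (Cmap n r (fvec n 1))"
  using has_k_cong Cmap_fvec_1_upper_half by blast

lemma kidx_Cmap_fvec_1: "has_k n r \<Longrightarrow> kidx n (Cmap n r (fvec n 1)) = kidx n r"
  using kidx_cong Cmap_fvec_1_upper_half by blast

lemma Cmap_fvec_1_involution:
  assumes "has_k n r"
  shows "Cmap n (Cmap n r (fvec n 1)) (fvec n 1) = r"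
  unfolding Cmap_fvec_1[OF has_k_Cmap_fvec_1[OF assms]] kidx_Cmap_fvec_1[OF assms]
  unfolding Cmap_fvec_1[OF assms] by (simp add: comp_assoc)

lemma Cmap_fvec_1_in_vecs: "r \<in> vecs n \<Longrightarrow> n \<ge> 1 \<Longrightarrow> Cmap n r (fvec n 1) \<in> vecs n"
  by (meson fvec_1_in_vecs linear_endo_in_vecs symplectic_Cmap symplectic_map_linear_endo)

lemma bij_betw_Cmap_fvec_1:
  "bij_betw (\<lambda>r. Cmap n r (fvec n 1)) {r \<in> vecs n. has_k n r} {r \<in> vecs n. has_k n r}"
proof -
  have "n \<ge> 1" if "has_k n r" for r using kidx_spec[OF that] by simp
  then show ?thesis
    using Cmap_fvec_1_involution has_k_Cmap_fvec_1 Cmap_fvec_1_in_vecs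
    by (intro bij_betw_byWitness[where f'="\<lambda>r. Cmap n r (fvec n 1)"]) auto
qed

section \<open>Transitivity on nonzero vectors\<close>

definition swap_halves :: "nat \<Rightarrow> (nat \<Rightarrow> bit) \<Rightarrow> nat \<Rightarrow> bit" where
  "swap_halves n x = (\<lambda>i. if i < n then x (n + i) else if i < 2*n then x (i - n) else 0)"

lemma symplectic_swap_halves: "symplectic_map n (swap_halves n)"
  unfolding symplectic_map_def linear_endo_def
proof (intro conjI ballI)
  fix x y :: "nat \<Rightarrow> bit"
  show "swap_halves n x \<in> vecs n" by (simp add: vecs_def swap_halves_def)
  show "swap_halves n (vadd x y) = vadd (swap_halves n x) (swap_halves n y)"
    by (simp add: swap_halves_def vadd_def fun_eq_iff)
  have "symp n (swap_halves n x) (swap_halves n y) = (\<Sum>i<n. x (n + i) * y i + x i * y (n + i))"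
    unfolding symp_def by (rule sum.cong) (simp_all add: swap_halves_def)
  then show "symp n (swap_halves n x) (swap_halves n y) = symp n x y"
    by (simp add: symp_def add.commute)
qed

lemma has_k_swap_halves:
  assumes "y \<in> vecs n" "y \<noteq> (\<lambda>_. 0)" "\<not> has_k n y"
  shows "has_k n (swap_halves n y)"
proof -
  obtain i where i: "i < 2*n" "y i = 1" using vecs_nonzero_index[OF assms(1,2)] .
  with assms(3) have "i < n" by (auto simp: has_k_iff)
  with i show ?thesis by (auto simp: has_k_iff swap_halves_def intro!: exI[of _ "n + i"])
qed

lemma card_perp_iso_subspaces_eq:
  assumes y: "y \<in> vecs n" "y \<noteq> (\<lambda>_. 0)"
  shows "card (perp_iso_subspaces n d y) = card (perp_iso_subspaces n d (fvec n 1))"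
proof -
  have reach: "card (perp_iso_subspaces n d z) = card (perp_iso_subspaces n d (fvec n 1))"
    if z: "z \<in> vecs n" "has_k n z" for z
  proof -
    define r where "r = Cmap n z (fvec n 1)"
    have "n \<ge> 1" using kidx_spec[OF z(2)] by simp
    then have "r \<in> vecs n" using Cmap_fvec_1_in_vecs[OF z(1)] by (simp add: r_def)
    moreover have "Cmap n r (fvec n 1) = z" using Cmap_fvec_1_involution[OF z(2)] by (simp add: r_def)
    ultimately show ?thesis
      using card_perp_iso_subspaces_image[OF symplectic_Cmap fvec_1_in_vecs[OF \<open>n \<ge> 1\<close>]] by metis
  qed
  show ?thesis
  proof (cases "has_k n y")
    case True
    then show ?thesis using reach y by blast
  next
    case False
    have "swap_halves n y \<in> vecs n"
      using linear_endo_in_vecs[OF symplectic_map_linear_endo[OF symplectic_swap_halves] y(1)] .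
    then have "card (perp_iso_subspaces n d (swap_halves n y)) = card (perp_iso_subspaces n d (fvec n 1))"
      using reach has_k_swap_halves[OF y False] by blast
    then show ?thesis
      using card_perp_iso_subspaces_image[OF symplectic_swap_halves y(1)] by simp
  qed
qed

lemma lincomb_unitv_upt:
  "lincomb c (map unitv [Suc 0..<n]) i = (if 1 \<le> i \<and> i < n then c (i - 1) else 0)"
proof -
  have "lincomb c (map unitv [Suc 0..<n]) i = (\<Sum>j<n - 1. if j = i - 1 \<and> 1 \<le> i then c j else 0)"
    unfolding lincomb_def by (rule sum.cong) (auto simp: unitv_def)
  then show ?thesis by (auto simp: sum.delta)
qed

lemma lspan_e2_to_en_in_perp_iso_subspaces:
  "lspan (map unitv [Suc 0..<n]) \<in> perp_iso_subspaces n (n - 1) (fvec n 1)"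
proof -
  define ws where "ws = map unitv [Suc 0..<n]"
  have indep: "lin_indep ws"
    unfolding lin_indep_def
  proof (intro allI impI)
    fix c j assume "lincomb c ws = (\<lambda>_. 0)" and "j < length ws"
    moreover from \<open>j < length ws\<close> have "lincomb c ws (Suc j) = c j"
      by (simp add: ws_def lincomb_unitv_upt)
    ultimately show "c j = 0" by simp
  qed
  have vanish_upper: "x i = 0" if "x \<in> lspan ws" "n \<le> i" for x i
    using that by (auto simp: ws_def lspan_def lincomb_unitv_upt)
  have vanish_0: "x 0 = 0" if "x \<in> lspan ws" for x
    using that by (auto simp: ws_def lspan_def lincomb_unitv_upt)
  have "lspan ws \<subseteq> vecs n" using vanish_upper by (auto simp: vecs_def)
  moreover have "isotropic n (lspan ws)"
    unfolding isotropic_def symp_def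
  proof (intro ballI sum.neutral)
    fix v w i assume "v \<in> lspan ws" "w \<in> lspan ws"
    then have "v (n + i) = 0" "w (n + i) = 0" by (simp_all add: vanish_upper)
    then show "v i * w (n + i) + v (n + i) * w i = 0" by simp
  qed
  moreover have "\<forall>v\<in>lspan ws. symp n v (fvec n 1) = 0"
    using vanish_0 by (simp add: fvec_def symp_unitv_right)
  moreover have "length ws = n - 1" "ws \<in> bases_of (lspan ws)"
    using indep by (simp_all add: ws_def bases_of_def)
  ultimately show ?thesis
    unfolding perp_iso_subspaces_def iso_subspaces_def subspace_dim_def ws_def by blast
qed

section \<open>Symplectic complements\<close>

definition is_dual :: "nat \<Rightarrow> (nat \<Rightarrow> bit) list \<Rightarrow> (nat \<Rightarrow> bit) list \<Rightarrow> bool" where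
  "is_dual n rs ws \<longleftrightarrow> length rs = length ws
     \<and> (\<forall>i<length ws. \<forall>j<length ws. symp n (rs ! i) (ws ! j) = (if i = j then 1 else 0))"

lemma symp_lincomb_dual:
  assumes "is_dual n rs ws" "j < length ws"
  shows "symp n (lincomb c rs) (ws ! j) = c j"
    and "symp n (rs ! j) (lincomb c ws) = c j"
proof -
  have "(\<Sum>l<length ws. c l * (if l = j then 1 else 0)) = c j"
       "(\<Sum>l<length ws. c l * (if j = l then 1 else 0)) = c j"
    using assms(2) by (simp_all add: if_distrib[of "(*) _"] cong: if_cong)
  then show "symp n (lincomb c rs) (ws ! j) = c j" "symp n (rs ! j) (lincomb c ws) = c j"
    using assms by (simp_all add: is_dual_def symp_lincomb_left symp_lincomb_right)
qed

lemma exists_separating_vector: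
  assumes dual: "is_dual n rs ws" and vecs: "set rs \<subseteq> vecs n" "set (w # ws) \<subseteq> vecs n"
    and indep: "lin_indep (w # ws)"
  obtains r where "r \<in> vecs n" "symp n r w = 1" "\<And>j. j < length ws \<Longrightarrow> symp n r (ws ! j) = 0"
proof -
  \<comment> \<open>Make w orthogonal to rs by correcting along ws, pair the result nontrivially with some u,
      then make u orthogonal to ws by correcting along rs.\<close>
  define w' where "w' = vadd w (lincomb (\<lambda>j. symp n (rs ! j) w) ws)"
  have w'_vecs: "w' \<in> vecs n" using vecs by (simp add: w'_def vadd_in_vecs lincomb_in_vecs)
  have rs_w': "symp n (rs ! j) w' = 0" if "j < length ws" for j
    using that by (simp add: w'_def symp_vadd_right symp_lincomb_dual[OF dual])
  have "w' = lincomb (\<lambda>l. if l = 0 then 1 else symp n (rs ! (l - 1)) w) (w # ws)"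
    by (simp add: w'_def lincomb_Cons vscale_def)
  then have "w' \<noteq> (\<lambda>_. 0)" using indep by (force simp: lin_indep_def)
  then obtain u where u: "u \<in> vecs n" "symp n u w' = 1"
    using symp_nondegenerate[OF w'_vecs] unitv_in_vecs by metis
  define r where "r = vadd u (lincomb (\<lambda>l. symp n u (ws ! l)) rs)"
  have r_ws: "symp n r (ws ! j) = 0" if "j < length ws" for j
    using that by (simp add: r_def symp_vadd_left symp_lincomb_dual[OF dual])
  have "symp n r w' = 1"
    using u(2) dual rs_w' by (simp add: r_def symp_vadd_left symp_lincomb_left is_dual_def)
  then have "symp n r w = 1"
    using r_ws by (simp add: w'_def symp_vadd_right symp_lincomb_right)
  moreover have "r \<in> vecs n" using u(1) vecs by (simp add: r_def vadd_in_vecs lincomb_in_vecs)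
  ultimately show ?thesis using that r_ws by blast
qed

lemma is_dual_Cons:
  assumes dual: "is_dual n rs ws"
    and r: "symp n r w = 1" "\<And>j. j < length ws \<Longrightarrow> symp n r (ws ! j) = 0"
  shows "is_dual n (r # map (\<lambda>q. vadd q (vscale (symp n q w) r)) rs) (w # ws)"
  unfolding is_dual_def
proof (intro conjI allI impI)
  show "length (r # map (\<lambda>q. vadd q (vscale (symp n q w) r)) rs) = length (w # ws)"
    using dual by (simp add: is_dual_def)
  fix i j assume "i < length (w # ws)" "j < length (w # ws)"
  then show "symp n ((r # map (\<lambda>q. vadd q (vscale (symp n q w) r)) rs) ! i) ((w # ws) ! j)
           = (if i = j then 1 else 0)"
    using dual r
    by (cases i; cases j) (simp_all add: is_dual_def symp_vadd_left symp_vscale_left)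
qed

lemma exists_dual_list:
  assumes "set ws \<subseteq> vecs n" "lin_indep ws"
  shows "\<exists>rs. set rs \<subseteq> vecs n \<and> is_dual n rs ws"
  using assms
proof (induction ws)
  case Nil
  then show ?case by (simp add: is_dual_def)
next
  case (Cons w ws)
  have "lin_indep ws"
    unfolding lin_indep_def
  proof (intro allI impI)
    fix c j assume "lincomb c ws = (\<lambda>_. 0)" "j < length ws"
    then have "lincomb (\<lambda>l. if l = 0 then 0 else c (l - 1)) (w # ws) = (\<lambda>_. 0)"
      by (simp add: lincomb_Cons vscale_def vadd_def)
    then show "c j = 0" using Cons.prems(2) \<open>j < length ws\<close> unfolding lin_indep_def by fastforce
  qed
  then obtain rs where rs: "set rs \<subseteq> vecs n" "is_dual n rs ws" using Cons by auto
  obtain r where r: "r \<in> vecs n" "symp n r w = 1" "\<And>j. j < length ws \<Longrightarrow> symp n r (ws ! j) = 0"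
    using exists_separating_vector[OF rs(2) rs(1) Cons.prems] by blast
  have "set (r # map (\<lambda>q. vadd q (vscale (symp n q w) r)) rs) \<subseteq> vecs n"
    using rs(1) r(1) by (auto simp: vadd_in_vecs vscale_in_vecs)
  then show ?case using is_dual_Cons[OF rs(2) r(2,3)] by blast
qed

definition symp_perp :: "nat \<Rightarrow> (nat \<Rightarrow> bit) set \<Rightarrow> (nat \<Rightarrow> bit) set" where
  "symp_perp n W = {r \<in> vecs n. \<forall>w\<in>W. symp n r w = 0}"

lemma card_symp_perp_basis:
  assumes "set ws \<subseteq> vecs n" "lin_indep ws"
  shows "2 ^ (2*n) = 2 ^ length ws * card (symp_perp n (set ws))"
proof -
  \<comment> \<open>With a dual list rs, r is determined by its pairings with ws together with its projection
      to the common perp, which gives the bijection below.\<close>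
  obtain rs where rs: "set rs \<subseteq> vecs n" "is_dual n rs ws" using exists_dual_list[OF assms] by blast
  define m where "m = length ws"
  define K where "K = symp_perp n (set ws)"
  define T where "T = supported_on {..<m}"
  define pair where "pair r = (\<lambda>j. if j < m then symp n r (ws ! j) else 0)" for r
  define lift where "lift y = lincomb y rs" for y
  have lift_vecs: "lift y \<in> vecs n" for y by (simp add: lift_def lincomb_in_vecs rs(1))
  have pair_lift: "symp n (lift y) (ws ! j) = y j" if "j < m" for y j
    using that symp_lincomb_dual(1)[OF rs(2)] by (simp add: lift_def m_def)
  have K_iff: "r \<in> K \<longleftrightarrow> r \<in> vecs n \<and> (\<forall>j<m. symp n r (ws ! j) = 0)" for r
    by (auto simp: K_def symp_perp_def m_def all_set_conv_all_nth)
  have "bij_betw (\<lambda>r. (vadd r (lift (pair r)), pair r)) (vecs n) (K \<times> T)"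
  proof (rule bij_betw_byWitness[where f'="\<lambda>(k, y). vadd k (lift y)"])
    show "\<forall>r\<in>vecs n. (\<lambda>(k, y). vadd k (lift y)) (vadd r (lift (pair r)), pair r) = r" by simp
    show "\<forall>p\<in>K \<times> T. (\<lambda>r. (vadd r (lift (pair r)), pair r)) ((\<lambda>(k, y). vadd k (lift y)) p) = p"
    proof
      fix p assume "p \<in> K \<times> T"
      then obtain k y where p: "p = (k, y)" "k \<in> K" "y \<in> T" by blast
      have "pair (vadd k (lift y)) = y"
        using p K_iff by (auto simp: pair_def T_def supported_on_def symp_vadd_left pair_lift)
      then show "(\<lambda>r. (vadd r (lift (pair r)), pair r)) ((\<lambda>(k, y). vadd k (lift y)) p) = p"
        using p by simp
    qed
    show "(\<lambda>r. (vadd r (lift (pair r)), pair r)) ` vecs n \<subseteq> K \<times> T"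
      using K_iff lift_vecs
      by (auto simp: T_def supported_on_def pair_def vadd_in_vecs symp_vadd_left pair_lift)
    show "(\<lambda>(k, y). vadd k (lift y)) ` (K \<times> T) \<subseteq> vecs n"
      using K_iff lift_vecs by (auto simp: vadd_in_vecs)
  qed
  then have "card (vecs n) = card K * card T"
    by (simp add: bij_betw_same_card card_cartesian_product)
  then show ?thesis by (simp add: card_vecs T_def card_supported_on K_def m_def mult.commute)
qed

lemma symp_perp_lspan: "symp_perp n (lspan ws) = symp_perp n (set ws)"
proof
  show "symp_perp n (lspan ws) \<subseteq> symp_perp n (set ws)"
    using set_in_lspan by (auto simp: symp_perp_def)
  show "symp_perp n (set ws) \<subseteq> symp_perp n (lspan ws)"
    by (auto simp: symp_perp_def lspan_def symp_lincomb_right all_set_conv_all_nth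
        intro!: sum.neutral)
qed

lemma card_symp_perp:
  assumes "subspace_dim n d W"
  shows "2 ^ (2*n) = 2 ^ d * card (symp_perp n W)"
proof -
  obtain ws where ws: "length ws = d" "lin_indep ws" "lspan ws = W" "W \<subseteq> vecs n"
    using assms by (auto simp: subspace_dim_def bases_of_def)
  then have "set ws \<subseteq> vecs n" using set_in_lspan by blast
  then show ?thesis using card_symp_perp_basis ws symp_perp_lspan by metis
qed

lemma card_symp_perp_hyperplane:
  assumes "W \<in> iso_subspaces n (n - 1)" "n \<ge> 1"
  shows "card (symp_perp n W) = 2 ^ (n + 1)"
proof -
  have "(2::nat) ^ (n - 1) * card (symp_perp n W) = 2 ^ (2*n)"
    using assms(1) card_symp_perp[of n "n - 1" W] by (simp add: iso_subspaces_def)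
  also have "2*n = (n - 1) + (n + 1)" using assms(2) by simp
  finally show ?thesis by (simp add: power_add)
qed

lemma mem_perp_iso_subspaces_iff:
  assumes "W \<in> iso_subspaces n d" "y \<in> vecs n"
  shows "W \<in> perp_iso_subspaces n d y \<longleftrightarrow> y \<in> symp_perp n W"
  using assms by (auto simp: perp_iso_subspaces_def symp_perp_def symp_commute[of n y])

lemma sum_sum_perp_iso_subspaces:
  fixes f :: "(nat \<Rightarrow> bit) set \<Rightarrow> real"
  assumes n: "n \<ge> 1"
  shows "(\<Sum>y\<in>vecs n - {\<lambda>_. 0}. \<Sum>W\<in>perp_iso_subspaces n (n - 1) y. f W)
       = (2 ^ (n + 1) - 1) * (\<Sum>W\<in>iso_subspaces n (n - 1). f W)"
proof -
  let ?S = "iso_subspaces n (n - 1)" and ?Y = "vecs n - {\<lambda>_. 0}"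
  have "(\<Sum>y\<in>?Y. \<Sum>W\<in>perp_iso_subspaces n (n - 1) y. f W)
      = (\<Sum>y\<in>?Y. \<Sum>W\<in>?S. if W \<in> perp_iso_subspaces n (n - 1) y then f W else 0)"
  proof (rule sum.cong[OF refl])
    fix y
    have "(\<Sum>W\<in>perp_iso_subspaces n (n - 1) y. f W)
        = (\<Sum>W\<in>{W \<in> ?S. W \<in> perp_iso_subspaces n (n - 1) y}. f W)"
      by (rule sum.cong) (auto simp: perp_iso_subspaces_def)
    also have "\<dots> = (\<Sum>W\<in>?S. if W \<in> perp_iso_subspaces n (n - 1) y then f W else 0)"
      by (rule sum.inter_filter[OF finite_iso_subspaces])
    finally show "(\<Sum>W\<in>perp_iso_subspaces n (n - 1) y. f W)
        = (\<Sum>W\<in>?S. if W \<in> perp_iso_subspaces n (n - 1) y then f W else 0)" .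
  qed
  also have "\<dots> = (\<Sum>W\<in>?S. \<Sum>y\<in>?Y. if W \<in> perp_iso_subspaces n (n - 1) y then f W else 0)"
    by (rule sum.swap)
  also have "\<dots> = (\<Sum>W\<in>?S. (2 ^ (n + 1) - 1) * f W)"
  proof (rule sum.cong[OF refl])
    fix W assume W: "W \<in> ?S"
    have "{y \<in> ?Y. W \<in> perp_iso_subspaces n (n - 1) y} = symp_perp n W - {\<lambda>_. 0}"
      using mem_perp_iso_subspaces_iff[OF W] by (auto simp: symp_perp_def)
    moreover have "card (symp_perp n W - {\<lambda>_. 0}) = 2 ^ (n + 1) - 1"
      using card_symp_perp_hyperplane[OF W n]
      by (subst card_Diff_singleton) (auto simp: symp_perp_def symp_commute[of n "\<lambda>_. 0"])
    ultimately show "(\<Sum>y\<in>?Y. if W \<in> perp_iso_subspaces n (n - 1) y then f W else 0)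
        = (2 ^ (n + 1) - 1) * f W"
      by (simp add: sum.inter_filter[symmetric])
  qed
  finally show ?thesis by (simp add: sum_distrib_left)
qed

section \<open>The output distribution and the ideal distribution\<close>

lemma measure_bind_pmf_of_set:
  assumes "finite X" "X \<noteq> {}"
  shows "measure_pmf.prob (pmf_of_set X \<bind> K) A = (\<Sum>x\<in>X. measure_pmf.prob (K x) A) / card X"
proof -
  have "ennreal (measure_pmf.prob (pmf_of_set X \<bind> K) A) = (\<integral>\<^sup>+x. emeasure (K x) A \<partial>pmf_of_set X)"
    by (simp add: measure_pmf.emeasure_eq_measure[symmetric])
  also have "\<dots> = (\<Sum>x\<in>X. emeasure (K x) A) / card X"
    by (rule nn_integral_pmf_of_set[OF assms(2,1)])
  also have "\<dots> = ennreal (\<Sum>x\<in>X. measure_pmf.prob (K x) A) / ennreal (real (card X))"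
    by (simp add: measure_pmf.emeasure_eq_measure ennreal_of_nat_eq_real_of_nat sum_ennreal)
  also have "\<dots> = ennreal ((\<Sum>x\<in>X. measure_pmf.prob (K x) A) / card X)"
    using assms by (simp add: divide_ennreal sum_nonneg card_gt_0_iff)
  finally show ?thesis
    by (subst (asm) ennreal_inj) (auto intro!: sum_nonneg divide_nonneg_nonneg)
qed

definition basis_pmf :: "(nat \<Rightarrow> bit) set \<Rightarrow> (nat \<Rightarrow> bit) list pmf" where
  "basis_pmf V = pmf_of_set (bases_of V)"

definition uniform_basis_pmf :: "(nat \<Rightarrow> bit) set set \<Rightarrow> (nat \<Rightarrow> bit) list pmf" where
  "uniform_basis_pmf S = pmf_of_set S \<bind> basis_pmf"

lemma map_basis_pmf:
  assumes g: "symplectic_map n g" and V: "V \<in> iso_subspaces n d"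
  shows "map_pmf (map g) (basis_pmf V) = basis_pmf (g ` V)"
proof -
  have Vv: "V \<subseteq> vecs n" by (rule iso_subspaces_subset_vecs[OF V])
  have "inj_on (map g) (bases_of V)"
    using bases_of_set_subset Vv
    by (intro inj_on_mapI inj_on_subset[OF symplectic_map_inj_on[OF g]]) blast
  then have "map_pmf (map g) (basis_pmf V) = pmf_of_set (map g ` bases_of V)"
    unfolding basis_pmf_def
    by (rule map_pmf_of_set_inj[OF _ bases_of_iso_subspace_nonempty[OF V]
          finite_bases_of_iso_subspace[OF V]])
  then show ?thesis by (simp add: basis_pmf_def bases_of_image[OF g Vv])
qed

lemma map_uniform_basis_pmf:
  assumes g: "symplectic_map n g" and y: "y \<in> vecs n" and ne: "perp_iso_subspaces n d y \<noteq> {}"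
  shows "map_pmf (map g) (uniform_basis_pmf (perp_iso_subspaces n d y))
       = uniform_basis_pmf (perp_iso_subspaces n d (g y))"
proof -
  have "map_pmf (map g) (uniform_basis_pmf (perp_iso_subspaces n d y))
      = pmf_of_set (perp_iso_subspaces n d y) \<bind> (\<lambda>V. basis_pmf (g ` V))"
    unfolding uniform_basis_pmf_def map_bind_pmf
    using ne finite_perp_iso_subspaces map_basis_pmf[OF g]
    by (intro bind_pmf_cong) (auto simp: perp_iso_subspaces_def)
  also have "\<dots> = map_pmf ((`) g) (pmf_of_set (perp_iso_subspaces n d y)) \<bind> basis_pmf"
    by (simp add: bind_map_pmf)
  also have "map_pmf ((`) g) (pmf_of_set (perp_iso_subspaces n d y))
           = pmf_of_set (perp_iso_subspaces n d (g y))"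
    using map_pmf_of_set_inj[OF inj_on_image_perp_iso_subspaces[OF g] ne finite_perp_iso_subspaces]
    unfolding image_perp_iso_subspaces[OF g y] .
  finally show ?thesis by (simp add: uniform_basis_pmf_def)
qed

lemma perp_iso_subspaces_nonempty:
  assumes "y \<in> vecs n" "y \<noteq> (\<lambda>_. 0)"
  shows "perp_iso_subspaces n (n - 1) y \<noteq> {}"
proof -
  have "card (perp_iso_subspaces n (n - 1) (fvec n 1)) > 0"
    using lspan_e2_to_en_in_perp_iso_subspaces finite_perp_iso_subspaces card_gt_0_iff by blast
  then have "card (perp_iso_subspaces n (n - 1) y) > 0"
    by (simp add: card_perp_iso_subspaces_eq[OF assms])
  then show ?thesis by auto
qed

lemma out_dist_eq:
  assumes n: "n \<ge> 1"
  shows "out_dist n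
       = pmf_of_set (vecs n) \<bind> (\<lambda>r. uniform_basis_pmf (perp_iso_subspaces n (n - 1) (Cmap n r (fvec n 1))))"
  unfolding out_dist_def perp_iso_subspaces_def[symmetric]
proof (rule bind_pmf_cong[OF refl])
  fix r assume "r \<in> set_pmf (pmf_of_set (vecs n))"
  moreover have "vecs n \<noteq> {}" using zero_in_vecs by blast
  ultimately have r: "r \<in> vecs n" by simp
  have "pmf_of_set (perp_iso_subspaces n (n - 1) (fvec n 1))
          \<bind> (\<lambda>V. pmf_of_set (bases_of V) \<bind> (\<lambda>vs. return_pmf (map (Cmap n r) vs)))
      = map_pmf (map (Cmap n r)) (uniform_basis_pmf (perp_iso_subspaces n (n - 1) (fvec n 1)))"
    by (simp add: uniform_basis_pmf_def basis_pmf_def map_pmf_def bind_assoc_pmf)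
  also have "\<dots> = uniform_basis_pmf (perp_iso_subspaces n (n - 1) (Cmap n r (fvec n 1)))"
    using lspan_e2_to_en_in_perp_iso_subspaces
    by (intro map_uniform_basis_pmf[OF symplectic_Cmap[OF r] fvec_1_in_vecs[OF n]]) blast
  finally show "pmf_of_set (perp_iso_subspaces n (n - 1) (fvec n 1))
          \<bind> (\<lambda>V. pmf_of_set (bases_of V) \<bind> (\<lambda>vs. return_pmf (map (Cmap n r) vs)))
      = uniform_basis_pmf (perp_iso_subspaces n (n - 1) (Cmap n r (fvec n 1)))" .
qed

lemma ideal_dist_eq: "ideal_dist n = uniform_basis_pmf (iso_subspaces n (n - 1))"
  by (simp add: ideal_dist_def uniform_basis_pmf_def basis_pmf_def[abs_def])

definition perp_basis_prob :: "nat \<Rightarrow> (nat \<Rightarrow> bit) list set \<Rightarrow> (nat \<Rightarrow> bit) \<Rightarrow> real" where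
  "perp_basis_prob n A y = measure_pmf.prob (uniform_basis_pmf (perp_iso_subspaces n (n - 1) y)) A"

lemma prob_out_dist:
  assumes n: "n \<ge> 1"
  shows "measure_pmf.prob (out_dist n) A
       = ((\<Sum>y\<in>{r \<in> vecs n. has_k n r}. perp_basis_prob n A y)
          + 2 ^ n * perp_basis_prob n A (fvec n 1)) / 2 ^ (2*n)"
proof -
  let ?q = "perp_basis_prob n A" and ?C = "\<lambda>r. Cmap n r (fvec n 1)"
  let ?G = "{r \<in> vecs n. has_k n r}" and ?B = "{r \<in> vecs n. \<not> has_k n r}"
  have "measure_pmf.prob (out_dist n) A = (\<Sum>r\<in>vecs n. ?q (?C r)) / card (vecs n)"
    unfolding out_dist_eq[OF n] perp_basis_prob_def
    using zero_in_vecs by (intro measure_bind_pmf_of_set finite_vecs) blast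
  also have "(\<Sum>r\<in>vecs n. ?q (?C r)) = (\<Sum>r\<in>?G. ?q (?C r)) + (\<Sum>r\<in>?B. ?q (?C r))"
    by (subst sum.union_disjoint[symmetric]) (auto intro: sum.cong finite_subset[OF _ finite_vecs])
  also have "(\<Sum>r\<in>?G. ?q (?C r)) = (\<Sum>r\<in>?G. ?q r)"
    by (rule sum.reindex_bij_betw[OF bij_betw_Cmap_fvec_1])
  also have "(\<Sum>r\<in>?B. ?q (?C r)) = 2 ^ n * ?q (fvec n 1)"
    using card_not_has_k[of n] by (simp add: Cmap_def)
  finally show ?thesis by (simp add: card_vecs)
qed

lemma prob_ideal_dist:
  assumes n: "n \<ge> 1"
  shows "measure_pmf.prob (ideal_dist n) A
       = (\<Sum>y\<in>vecs n - {\<lambda>_. 0}. perp_basis_prob n A y) / (2 ^ (2*n) - 1)"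
proof -
  let ?S = "iso_subspaces n (n - 1)" and ?Y = "vecs n - {\<lambda>_. 0}"
  define h where "h W = measure_pmf.prob (basis_pmf W) A" for W
  define M where "M = real (card (perp_iso_subspaces n (n - 1) (fvec n 1)))"
  define N where "N = (2::real) ^ (n + 1) - 1"
  have S: "finite ?S" "?S \<noteq> {}"
    using finite_iso_subspaces lspan_e2_to_en_in_perp_iso_subspaces[of n]
    unfolding perp_iso_subspaces_def by blast+
  have "N > 0" using one_less_power[of "2::real" "n + 1"] by (simp add: N_def)
  have card_eq: "card (perp_iso_subspaces n (n - 1) y) = M" if "y \<in> ?Y" for y
    using card_perp_iso_subspaces_eq[of y n] that by (simp add: M_def)
  have q: "perp_basis_prob n A y = (\<Sum>W\<in>perp_iso_subspaces n (n - 1) y. h W) / M" if "y \<in> ?Y" for y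
  proof -
    have "y \<in> vecs n" "y \<noteq> (\<lambda>_. 0)" using that by auto
    from measure_bind_pmf_of_set[OF finite_perp_iso_subspaces perp_iso_subspaces_nonempty[OF this]]
    show ?thesis using card_eq[OF that] by (simp add: perp_basis_prob_def uniform_basis_pmf_def h_def)
  qed
  \<comment> \<open>Double counting with weight 1 relates the normalisations of the two sides.\<close>
  have "(2 ^ (2*n) - 1) * M = N * card ?S"
    using sum_sum_perp_iso_subspaces[OF n, of "\<lambda>_. 1"] card_eq card_vecs[of n]
    by (simp add: N_def card_Diff_singleton)
  moreover have "(\<Sum>y\<in>?Y. perp_basis_prob n A y) = N * (\<Sum>W\<in>?S. h W) / M"
  proof -
    have "(\<Sum>y\<in>?Y. perp_basis_prob n A y) = (\<Sum>y\<in>?Y. (\<Sum>W\<in>perp_iso_subspaces n (n - 1) y. h W) / M)"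
      using q by (rule sum.cong[OF refl])
    also have "\<dots> = (\<Sum>y\<in>?Y. \<Sum>W\<in>perp_iso_subspaces n (n - 1) y. h W) / M"
      by (rule sum_divide_distrib[symmetric])
    finally show ?thesis using sum_sum_perp_iso_subspaces[OF n, of h] by (simp add: N_def)
  qed
  moreover have "measure_pmf.prob (ideal_dist n) A = (\<Sum>W\<in>?S. h W) / card ?S"
    unfolding ideal_dist_eq uniform_basis_pmf_def h_def by (rule measure_bind_pmf_of_set[OF S])
  moreover have "(2::real) ^ (2*n) - 1 > 0" using one_less_power[of "2::real" "2*n"] n by simp
  ultimately show ?thesis using \<open>N > 0\<close> by (simp add: field_simps)
qed

lemma abs_diff_mixtures_le:
  fixes a b c t :: real
  assumes t: "t > 1" and a: "0 \<le> a" "a \<le> t^2 - t" and b: "0 \<le> b" "b \<le> t"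
    and c: "0 \<le> c" "c \<le> t - 1"
  shows "\<bar>(a + b) / t^2 - (a + c) / (t^2 - 1)\<bar> \<le> 1 / t"
proof -
  have t2: "t^2 - 1 > 0" using one_less_power[OF t, of 2] by simp
  define D where "D = t^2 * (t^2 - 1)"
  have D: "D > 0" using t2 t by (simp add: D_def)
  define N where "N = b * (t^2 - 1) - a - c * t^2"
  have "t \<noteq> 0" "t^2 - 1 \<noteq> 0" using t t2 by linarith+
  then have "(a + b) / t^2 - (a + c) / (t^2 - 1) = N / D"
    by (simp add: D_def N_def field_simps)
  moreover have "N \<le> t * (t^2 - 1)"
  proof -
    have "b * (t^2 - 1) \<le> t * (t^2 - 1)" using b(2) t2 by (simp add: mult_right_mono)
    moreover have "0 \<le> c * t^2" using c(1) by simp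
    ultimately show ?thesis using a(1) by (simp add: N_def)
  qed
  moreover have "- (t * (t^2 - 1)) \<le> N"
  proof -
    have "c * t^2 \<le> (t - 1) * t^2" using c(2) by (simp add: mult_right_mono)
    moreover have "(t^2 - t) + (t - 1) * t^2 = t * (t^2 - 1)"
      by (simp add: power2_eq_square algebra_simps)
    moreover have "0 \<le> b * (t^2 - 1)" using b(1) t2 by simp
    ultimately show ?thesis using a(2) by (simp add: N_def)
  qed
  ultimately have "\<bar>(a + b) / t^2 - (a + c) / (t^2 - 1)\<bar> \<le> t * (t^2 - 1) / D"
    using D by (simp add: abs_le_iff divide_right_mono le_divide_eq)
  also have "\<dots> = 1 / t" using t2 t by (simp add: D_def power2_eq_square field_simps)
  finally show ?thesis .
qed

lemma tvd_out_ideal_le: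
  assumes n: "n \<ge> 1"
  shows "tvd (out_dist n) (ideal_dist n) \<le> 1 / 2 ^ n"
  unfolding tvd_def
proof (rule cSUP_least)
  fix A :: "(nat \<Rightarrow> bit) list set"
  let ?q = "perp_basis_prob n A" and ?G = "{r \<in> vecs n. has_k n r}"
  let ?B = "{r \<in> vecs n. \<not> has_k n r} - {\<lambda>_. 0}"
  \<comment> \<open>a, b, c: total weight of the has_k vectors, of the 2^n vectors r with C f1 = f1, and of the
      nonzero vectors without has_k.\<close>
  define a where "a = (\<Sum>y\<in>?G. ?q y)"
  define b where "b = 2 ^ n * ?q (fvec n 1)"
  define c where "c = (\<Sum>y\<in>?B. ?q y)"
  define t where "t = (2::real) ^ n"
  have q01: "0 \<le> ?q y" "?q y \<le> 1" for y by (simp_all add: perp_basis_prob_def)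
  have fin: "finite ?G" "finite ?B" by (auto intro: finite_subset[OF _ finite_vecs])
  have "(\<lambda>_. 0) \<in> {r \<in> vecs n. \<not> has_k n r}" by (simp add: has_k_def)
  then have card_B: "card ?B = 2 ^ n - 1" by (simp add: card_Diff_singleton card_not_has_k)
  have "real (card ?G) + 2 ^ n = 2 ^ (2*n)"
    using arg_cong[OF card_has_k[of n], of real] by simp
  moreover have t_sq: "t^2 = 2 ^ (2*n)" by (simp add: t_def power_mult[symmetric] mult.commute)
  ultimately have card_G: "real (card ?G) = t^2 - t" by (simp add: t_def)
  have "vecs n - {\<lambda>_. 0} = ?G \<union> ?B" by (auto simp: has_k_def)
  then have "(\<Sum>y\<in>vecs n - {\<lambda>_. 0}. ?q y) = (\<Sum>y\<in>?G \<union> ?B. ?q y)" by simp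
  also have "\<dots> = a + c"
    unfolding a_def c_def by (rule sum.union_disjoint) (use fin in auto)
  finally have "(\<Sum>y\<in>vecs n - {\<lambda>_. 0}. ?q y) = a + c" .
  then have "measure_pmf.prob (ideal_dist n) A = (a + c) / (t^2 - 1)"
    by (simp add: prob_ideal_dist[OF n] t_sq)
  moreover have "measure_pmf.prob (out_dist n) A = (a + b) / t^2"
    by (simp add: prob_out_dist[OF n] a_def b_def t_sq flip: t_def)
  moreover have "t > 1" using one_less_power[of "2::real" n] n by (simp add: t_def)
  moreover have "0 \<le> a" "a \<le> t^2 - t"
    using sum_mono[of ?G ?q "\<lambda>_. 1"] q01 card_G by (auto simp: a_def intro: sum_nonneg)
  moreover have "0 \<le> b" "b \<le> t" using q01[of "fvec n 1"] by (simp_all add: b_def t_def)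
  moreover have "0 \<le> c" "c \<le> t - 1"
    using sum_mono[of ?B ?q "\<lambda>_. 1"] q01 card_B by (auto simp: c_def t_def intro: sum_nonneg)
  ultimately show "\<bar>measure_pmf.prob (out_dist n) A - measure_pmf.prob (ideal_dist n) A\<bar> \<le> 1 / 2 ^ n"
    using abs_diff_mixtures_le by (simp add: t_def)
qed simp

lemma negligible_inverse_pow2: "negligible (\<lambda>n. 1 / 2 ^ n)"
  unfolding negligible_def
proof
  fix c :: nat
  have "eventually (\<lambda>n::nat. real n ^ c \<le> 2 ^ n) at_top" by real_asymp
  then obtain N where N: "\<And>n. n \<ge> N \<Longrightarrow> real n ^ c \<le> 2 ^ n"
    by (auto simp: eventually_at_top_linorder)
  have "\<bar>1 / 2 ^ n\<bar> \<le> 1 / real n ^ c" if "n \<ge> max N 1" for n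
    using N[of n] that by (simp add: frac_le)
  then show "\<exists>N. \<forall>n\<ge>N. \<bar>1 / 2 ^ n\<bar> \<le> 1 / real n ^ c" by blast
qed

theorem lemma4p3:
  shows "(\<forall>n\<ge>2. \<forall>r\<in>vecs n. \<forall>v\<in>vecs n. \<forall>w\<in>vecs n.
            symp n (Cmap n r v) (Cmap n r w) = symp n v w)
       \<and> (\<exists>\<epsilon>. negligible \<epsilon> \<and> (\<forall>n\<ge>2. tvd (out_dist n) (ideal_dist n) \<le> \<epsilon> n))"
proof
  show "\<forall>n\<ge>2. \<forall>r\<in>vecs n. \<forall>v\<in>vecs n. \<forall>w\<in>vecs n.
          symp n (Cmap n r v) (Cmap n r w) = symp n v w"
    using symplectic_map_symp[OF symplectic_Cmap] by blast
  show "\<exists>\<epsilon>. negligible \<epsilon> \<and> (\<forall>n\<ge>2. tvd (out_dist n) (ideal_dist n) \<le> \<epsilon> n)"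
    using negligible_inverse_pow2 tvd_out_ideal_le by (intro exI[of _ "\<lambda>n. 1 / 2 ^ n"]) simp
qed

end
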